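(* Let $h>0$ and let $\alpha:\mathbb R\to\mathbb R^2$ be a regular curve parametrized by arc length whose signed curvature satisfies $k(s)=K(\tau(s),\mu(s))$ for all $s$, where $\tau=\langle\alpha,\alpha'\rangle$ and $\mu=\langle\alpha,J\alpha'\rangle$. Then $\alpha(s)\neq0$ for $|s|$ sufficiently large, and a continuous polar angle $\omega$ of $\alpha$ (i.e. $\alpha=|\alpha|(\cos\omega,\sin\omega)$), defined on each of the two unbounded intervals where $|s|$ is large, satisfies $\lim_{s\to+\infty}\omega(s)=+\infty$ and $\lim_{s\to-\infty}\omega(s)=+\infty$.
   Context: Fix $h>0$. For $(\tau,\mu)\in\mathbb R^2$ put $r^2=\tau^2+\mu^2$ and define $K:\mathbb R^2\to\mathbb R$ by $$K(\tau,\mu)=\frac{2\big(\tau^2+h^2(1+\mu^2)\big)\tau+(h^2-1)(1+\mu^2)\mu}{(1+r^2)(h^2+r^2)}.$$ $J(x_1,x_2)=(-x_2,x_1)$ on $\mathbb R^2$, $\langle\cdot,\cdot\rangle$ is the Euclidean inner product, and the signed curvature of an arc-length curve $\alpha$ is $k=\langle\alpha'',J\alpha'\rangle$. *)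

theory Defs
  imports "HOL-Analysis.Analysis"
begin

definition K :: "real \<Rightarrow> real \<Rightarrow> real \<Rightarrow> real" where
  "K h \<tau> \<mu> =
     (2 * (\<tau>^2 + h^2 * (1 + \<mu>^2)) * \<tau> + (h^2 - 1) * (1 + \<mu>^2) * \<mu>)
     / ((1 + (\<tau>^2 + \<mu>^2)) * (h^2 + (\<tau>^2 + \<mu>^2)))"

definition J :: "real \<times> real \<Rightarrow> real \<times> real" where
  "J x = (- snd x, fst x)"

end

theory Submission
  imports Defs "HOL-Real_Asymp.Real_Asymp"
begin

text \<open>
  Along the curve, \<open>\<tau> = \<langle>\<alpha>, \<alpha>'\<rangle>\<close> and \<open>\<mu> = \<langle>\<alpha>, J \<alpha>'\<rangle>\<close> solve
  \<open>\<tau>' = 1 + K(\<tau>, \<mu>) \<mu>\<close>, \<open>\<mu>' = - K(\<tau>, \<mu>) \<tau>\<close>, and \<open>\<rho> = |\<alpha>|\<^sup>2 = \<tau>\<^sup>2 + \<mu>\<^sup>2\<close> has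
  derivative \<open>2 \<tau>\<close>, so \<open>|\<alpha>|\<close> grows at most linearly. If \<open>\<tau>\<close> stayed \<open>\<le> 0\<close>, then \<open>\<rho>\<close>
  would stay bounded, and near \<open>\<tau> = 0\<close> the system would push \<open>\<tau>\<close> up at a uniform rate;
  so \<open>\<tau>\<close> becomes positive, and then stays positive. From then on the slope \<open>\<mu> / \<tau>\<close>
  decreases at a rate \<open>\<ge> C / s\<close> as long as it is \<open>\<ge> -\<beta>\<close>, so it ends up below \<open>-\<beta>\<close>
  for good. The polar angle then satisfies \<open>\<omega>' = - \<mu> / \<rho> \<ge> c / s\<close>, whose integral
  diverges logarithmically. Reversing the parameter yields a curve of the same kind, as \<open>K\<close>
  is odd, which gives the limit for \<open>s \<rightarrow> -\<infinity>\<close>.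
\<close>

text \<open>
  For the system of \<open>tau_mu_system\<close>, \<open>1 + K(\<tau>, \<mu>) \<mu>\<close> is \<open>\<tau>'\<close> and
  \<open>(\<mu> + K(\<tau>, \<mu>) (\<tau>\<^sup>2 + \<mu>\<^sup>2)) / \<tau>\<^sup>2\<close> is \<open>-(\<mu> / \<tau>)'\<close>.
\<close>

definition K_num :: "real \<Rightarrow> real \<Rightarrow> real \<Rightarrow> real" where
  "K_num h t m = 2 * (t^2 + h^2 * (1 + m^2)) * t + (h^2 - 1) * (1 + m^2) * m"

definition K_den :: "real \<Rightarrow> real \<Rightarrow> real \<Rightarrow> real" where
  "K_den h t m = (1 + (t^2 + m^2)) * (h^2 + (t^2 + m^2))"

lemma K_eq_num_div_den: "K h t m = K_num h t m / K_den h t m"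
  unfolding K_def K_num_def K_den_def by simp

lemma K_den_pos: "h \<noteq> 0 \<Longrightarrow> 0 < K_den h t m"
  unfolding K_den_def by (intro mult_pos_pos add_pos_nonneg) auto

lemma K_minus_minus: "K h (- t) (- m) = - K h t m"
  unfolding K_def by (simp add: algebra_simps minus_divide_left)

lemma K_den_add_K_num_mul:
  "K_den h t m + K_num h t m * m
     = h^2 * (1 + m^2)^2 + t^2 * (1 + h^2 + 2 * m^2 + t^2) + 2 * t * m * (t^2 + h^2 * (1 + m^2))"
  unfolding K_den_def K_num_def by (simp add: algebra_simps power2_eq_square)

lemma one_add_K_mul_eq:
  "h \<noteq> 0 \<Longrightarrow> 1 + K h t m * m = (K_den h t m + K_num h t m * m) / K_den h t m"
  using K_den_pos[of h t m] by (simp add: K_eq_num_div_den field_simps)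

lemma one_add_K_mul_pos_at_zero: "h \<noteq> 0 \<Longrightarrow> 0 < 1 + K h 0 m * m"
proof -
  assume h: "h \<noteq> 0"
  have "0 < 1 + m^2" by (simp add: add_pos_nonneg)
  then have "0 < h^2 * (1 + m^2)^2 / K_den h 0 m"
    using K_den_pos[OF h] h by (intro divide_pos_pos mult_pos_pos) auto
  then show ?thesis by (simp add: one_add_K_mul_eq[OF h] K_den_add_K_num_mul)
qed

lemma one_add_K_mul_ge_near_zero:
  assumes h: "h \<noteq> 0" and t: "\<bar>t\<bar> \<le> h^2 / (4 * (1 + r)^2 * (1 + h^2))" and tm: "t^2 + m^2 \<le> r"
  shows "h^2 / (2 * (1 + r) * (h^2 + r)) \<le> 1 + K h t m * m"
proof -
  have t2: "t^2 \<le> r" and m2: "m^2 \<le> r"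
    using tm zero_le_power2[of t] zero_le_power2[of m] by linarith+
  have r: "0 \<le> r" using t2 zero_le_power2[of t] by linarith
  have "\<bar>m\<bar> \<le> 1 + m^2"
    using zero_le_power2[of "\<bar>m\<bar> - 1"] by (simp add: power2_eq_square algebra_simps)
  then have m: "\<bar>m\<bar> \<le> 1 + r" using m2 by linarith
  have bracket: "t^2 + h^2 * (1 + m^2) \<le> (1 + h^2) * (1 + r)"
  proof -
    have "h^2 * m^2 \<le> h^2 * r" using m2 by (simp add: mult_left_mono)
    then show ?thesis using t2 r zero_le_power2[of h] by (simp add: algebra_simps)
  qed
  have "\<bar>2 * t * m * (t^2 + h^2 * (1 + m^2))\<bar> = 2 * \<bar>t\<bar> * \<bar>m\<bar> * (t^2 + h^2 * (1 + m^2))"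
    by (simp add: abs_mult)
  also have "\<dots> \<le> 2 * (h^2 / (4 * (1 + r)^2 * (1 + h^2))) * (1 + r) * ((1 + h^2) * (1 + r))"
    using t m bracket by (intro mult_mono) auto
  also have "\<dots> = 2 * (h^2 / (4 * ((1 + r)^2 * (1 + h^2)))) * ((1 + r)^2 * (1 + h^2))"
    by (simp add: power2_eq_square algebra_simps)
  also have "\<dots> = h^2 / 2"
  proof -
    have "1 + r \<noteq> 0" "1 + h^2 \<noteq> 0" using r zero_le_power2[of h] by linarith+
    then have "(1 + r)^2 * (1 + h^2) \<noteq> 0" by simp
    then show ?thesis by (simp add: field_simps)
  qed
  finally have cross: "\<bar>2 * t * m * (t^2 + h^2 * (1 + m^2))\<bar> \<le> h^2 / 2" .
  have "1 \<le> (1 + m^2)^2"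
    by (simp add: one_le_power)
  then have "h^2 \<le> h^2 * (1 + m^2)^2"
    using mult_left_mono[of 1 "(1 + m^2)^2" "h^2"] by simp
  moreover have "0 \<le> t^2 * (1 + h^2 + 2 * m^2 + t^2)"
    by simp
  ultimately have num: "h^2 / 2 \<le> K_den h t m + K_num h t m * m"
    unfolding K_den_add_K_num_mul using cross by linarith
  have den: "K_den h t m \<le> (1 + r) * (h^2 + r)"
    unfolding K_den_def using tm r by (intro mult_mono) auto
  have "h^2 / (2 * (1 + r) * (h^2 + r)) = (h^2 / 2) / ((1 + r) * (h^2 + r))"
    by simp
  also have "\<dots> \<le> (h^2 / 2) / K_den h t m"
    using den K_den_pos[OF h, of t m] r h by (intro divide_left_mono mult_pos_pos) (auto intro: add_pos_nonneg)
  also have "\<dots> \<le> 1 + K h t m * m"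
    unfolding one_add_K_mul_eq[OF h] using num K_den_pos[OF h, of t m] by (intro divide_right_mono) auto
  finally show ?thesis .
qed

lemma mul_K_den_add_K_num_mul:
  "m * K_den h t m + K_num h t m * (t^2 + m^2)
     = h^2 * m + 2 * h^2 * (t^2 + m^2) * (m + t) + (t^2 + m^2) * (m + 2 * t) * (t^2 + h^2 * m^2)"
  unfolding K_den_def K_num_def by (simp add: algebra_simps power2_eq_square)

lemma add_K_mul_eq:
  "h \<noteq> 0 \<Longrightarrow> m + K h t m * (t^2 + m^2) = (m * K_den h t m + K_num h t m * (t^2 + m^2)) / K_den h t m"
  using K_den_pos[of h t m] by (simp add: K_eq_num_div_den field_simps)

lemma mul_K_den_add_K_num_mul_ge:
  assumes t: "0 < t" and \<beta>: "\<beta> \<le> 1/2" "\<beta> \<le> (t^2 + m^2) / 2" and m: "- (\<beta> * t) \<le> m"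
  shows "h^2 / (1 + h^2) * (t^2 + m^2) * t * (h^2 + (t^2 + m^2)) / 2
    \<le> m * K_den h t m + K_num h t m * (t^2 + m^2)"
proof -
  define \<rho> where "\<rho> = t^2 + m^2"
  define c where "c = h^2 / (1 + h^2)"
  have \<rho>: "0 < \<rho>" using t unfolding \<rho>_def by (simp add: add_pos_nonneg)
  have c: "c \<le> 1" "c \<le> h^2"
    unfolding c_def by (auto simp: field_simps add_pos_nonneg)
  have "\<beta> * t \<le> t / 2" using mult_right_mono[OF \<beta>(1), of t] t by simp
  then have mt: "t \<le> 2 * (m + t)" using m by (simp add: field_simps)
  have a: "h^2 * \<rho> * t \<le> 2 * h^2 * \<rho> * (m + t)"
    using mult_left_mono[OF mt, of "h^2 * \<rho>"] \<rho> by (simp add: algebra_simps)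
  have b: "- (h^2 * \<rho> * t / 2) \<le> h^2 * m"
  proof -
    have "\<beta> * t \<le> \<rho> / 2 * t" using \<beta> t unfolding \<rho>_def by (intro mult_right_mono) auto
    then show ?thesis using m mult_left_mono[of "- (\<rho> / 2 * t)" m "h^2"] by (simp add: algebra_simps)
  qed
  have c': "\<rho> * t * (t^2 + h^2 * m^2) \<le> \<rho> * (m + 2 * t) * (t^2 + h^2 * m^2)"
    using mt \<rho> t by (intro mult_right_mono mult_left_mono) auto
  have "\<rho> * t * (h^2 + t^2 + h^2 * m^2) + \<rho> * t * (t^2 + h^2 * m^2)
      = h^2 * \<rho> * t + 2 * (\<rho> * t * (t^2 + h^2 * m^2))"
    by (simp add: algebra_simps)
  moreover have "0 \<le> \<rho> * t * (t^2 + h^2 * m^2)" using \<rho> t by simp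
  ultimately have P: "\<rho> * t * (h^2 + t^2 + h^2 * m^2) / 2
      \<le> h^2 * m + 2 * h^2 * \<rho> * (m + t) + \<rho> * (m + 2 * t) * (t^2 + h^2 * m^2)"
    using a b c' by linarith
  have "c * h^2 \<le> 1 * h^2" "c * t^2 \<le> 1 * t^2" "c * m^2 \<le> h^2 * m^2"
    using c by (intro mult_right_mono; simp)+
  then have "c * (h^2 + \<rho>) \<le> h^2 + t^2 + h^2 * m^2"
    unfolding \<rho>_def by (simp add: distrib_left)
  then have "\<rho> * t * (c * (h^2 + \<rho>)) \<le> \<rho> * t * (h^2 + t^2 + h^2 * m^2)"
    using \<rho> t by (intro mult_left_mono) auto
  moreover have "m * K_den h t m + K_num h t m * \<rho>
      = h^2 * m + 2 * h^2 * \<rho> * (m + t) + \<rho> * (m + 2 * t) * (t^2 + h^2 * m^2)"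
    unfolding \<rho>_def by (rule mul_K_den_add_K_num_mul)
  moreover have "c * \<rho> * t * (h^2 + \<rho>) = \<rho> * t * (c * (h^2 + \<rho>))"
    by (simp add: ac_simps)
  ultimately have "c * \<rho> * t * (h^2 + \<rho>) / 2 \<le> m * K_den h t m + K_num h t m * \<rho>"
    using P by linarith
  then show ?thesis
    unfolding c_def \<rho>_def .
qed

lemma add_K_mul_div_sq_ge:
  assumes h: "h \<noteq> 0" and t: "0 < t" "t \<le> X" and r: "0 < r" "r \<le> t^2 + m^2"
    and \<beta>: "\<beta> \<le> 1/2" "\<beta> \<le> r/2" and m: "- (\<beta> * t) \<le> m"
  shows "h^2 / (1 + h^2) * (r / (1 + r)) / (2 * X) \<le> (m + K h t m * (t^2 + m^2)) / t^2"
proof -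
  define \<rho> where "\<rho> = t^2 + m^2"
  define c where "c = h^2 / (1 + h^2)"
  have \<rho>: "0 < \<rho>" using r unfolding \<rho>_def by linarith
  have "0 < c"
    using h unfolding c_def by (simp add: add_pos_nonneg)
  have num: "c * \<rho> * t * (h^2 + \<rho>) / 2 \<le> m * K_den h t m + K_num h t m * \<rho>"
    unfolding c_def \<rho>_def using t \<beta> r m by (intro mul_K_den_add_K_num_mul_ge) auto
  have den: "K_den h t m = (1 + \<rho>) * (h^2 + \<rho>)"
    unfolding K_den_def \<rho>_def ..
  have "r * (1 + \<rho>) \<le> \<rho> * (1 + r)"
    using r unfolding \<rho>_def by (simp add: algebra_simps)
  then have "r / (1 + r) \<le> \<rho> / (1 + \<rho>)"
    using r \<rho> by (simp add: divide_simps)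
  have "c * (r / (1 + r)) / (2 * X) \<le> c * (r / (1 + r)) / (2 * t)"
    using \<open>0 < c\<close> r t by (intro divide_left_mono mult_nonneg_nonneg mult_pos_pos) auto
  also have "\<dots> \<le> c * (\<rho> / (1 + \<rho>)) / (2 * t)"
    using \<open>r / (1 + r) \<le> \<rho> / (1 + \<rho>)\<close> \<open>0 < c\<close> t by (intro divide_right_mono mult_left_mono) auto
  also have "\<dots> = (c * \<rho> * (t * (h^2 + \<rho>))) / (2 * (1 + \<rho>) * t * (t * (h^2 + \<rho>)))"
  proof -
    have "h^2 + \<rho> \<noteq> 0" using \<rho> zero_le_power2[of h] by linarith
    then have nz: "t * (h^2 + \<rho>) \<noteq> 0" using t by simp
    have "c * (\<rho> / (1 + \<rho>)) / (2 * t) = (c * \<rho>) / (2 * (1 + \<rho>) * t)"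
      by simp
    also have "\<dots> = (c * \<rho> * (t * (h^2 + \<rho>))) / (2 * (1 + \<rho>) * t * (t * (h^2 + \<rho>)))"
      by (rule nonzero_mult_divide_mult_cancel_right[OF nz, symmetric])
    finally show ?thesis .
  qed
  also have "\<dots> = c * \<rho> * t * (h^2 + \<rho>) / 2 / (K_den h t m * t^2)"
    by (simp only: den power2_eq_square divide_divide_eq_left mult_ac)
  also have "\<dots> \<le> (m * K_den h t m + K_num h t m * \<rho>) / (K_den h t m * t^2)"
    using num K_den_pos[OF h, of t m] t by (intro divide_right_mono) auto
  also have "\<dots> = (m + K h t m * \<rho>) / t^2"
    unfolding \<rho>_def add_K_mul_eq[OF h] by simp
  finally show ?thesis unfolding c_def \<rho>_def .
qed

lemma neg_div_sq_ge:
  fixes \<beta> t m X :: real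
  assumes "0 < \<beta>" "0 \<le> t" "\<beta> * t < - m" "- m \<le> X"
  shows "\<beta>^2 / (1 + \<beta>^2) / X \<le> - m / (t^2 + m^2)"
proof -
  have m_neg: "0 < - m" using assms mult_nonneg_nonneg[of \<beta> t] by linarith
  have "(\<beta> * t)^2 \<le> (- m)^2"
    using assms by (intro power_mono) auto
  then have "\<beta>^2 * (t^2 + m^2) \<le> (1 + \<beta>^2) * (- m) * (- m)"
    by (simp add: power_mult_distrib algebra_simps power2_eq_square)
  also have "\<dots> \<le> (1 + \<beta>^2) * (- m) * X"
  proof (rule mult_left_mono)
    show "0 \<le> (1 + \<beta>^2) * (- m)" using m_neg by (intro mult_nonneg_nonneg) auto
  qed (use assms in simp)
  finally show ?thesis
    using m_neg assms by (simp add: divide_simps algebra_simps add_pos_nonneg)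
qed

section \<open>Comparison lemmas for real functions\<close>

lemma DERIV_neg_at_zeros_imp_neg:
  fixes g g' :: "real \<Rightarrow> real"
  assumes deriv: "\<And>t. a \<le> t \<Longrightarrow> (g has_real_derivative g' t) (at t)"
    and start: "g a < 0"
    and at_zeros: "\<And>t. a \<le> t \<Longrightarrow> g t = 0 \<Longrightarrow> g' t < 0"
    and "a \<le> b"
  shows "g b < 0"
proof (rule ccontr)
  assume "\<not> g b < 0"
  have cont: "continuous_on {a..t} g" for t
    using deriv by (intro continuous_at_imp_continuous_on ballI) (auto intro: DERIV_isCont)
  define Z where "Z = {t \<in> {a..b}. g t = 0}"
  have "Z \<noteq> {}"
    using IVT'[of g a 0 b, OF _ _ \<open>a \<le> b\<close> cont] start \<open>\<not> g b < 0\<close> unfolding Z_def by force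
  moreover have "bdd_below Z"
    unfolding Z_def by (auto intro: bdd_belowI[where m = a])
  moreover have "closed Z"
    unfolding Z_def by (rule continuous_closed_preimage_constant[OF cont]) simp
  ultimately have "Inf Z \<in> Z"
    by (rule closed_contains_Inf)
  define t0 where "t0 = Inf Z"
  have t0: "a < t0" "g t0 = 0"
    using \<open>Inf Z \<in> Z\<close> start unfolding t0_def Z_def by (auto simp: order_le_less)
  have neg_before: "g t < 0" if "a \<le> t" "t < t0" for t
  proof (rule ccontr)
    assume "\<not> g t < 0"
    then obtain u where "a \<le> u" "u \<le> t" "g u = 0"
      using IVT'[of g a 0 t, OF _ _ \<open>a \<le> t\<close> cont] start by force
    then have "u \<in> Z"
      using that \<open>Inf Z \<in> Z\<close> unfolding t0_def Z_def by auto
    then have "t0 \<le> u"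
      unfolding t0_def using \<open>bdd_below Z\<close> by (rule cInf_lower)
    then show False using \<open>u \<le> t\<close> \<open>t < t0\<close> by simp
  qed
  obtain d where "0 < d" and d: "\<And>e. 0 < e \<Longrightarrow> e < d \<Longrightarrow> g t0 < g (t0 - e)"
    using DERIV_neg_dec_left[OF deriv at_zeros] t0 by (metis less_imp_le)
  define e where "e = min (d / 2) ((t0 - a) / 2)"
  have "0 < e" "e < d" "a \<le> t0 - e"
    using \<open>0 < d\<close> t0 min.cobounded2[of "d / 2" "(t0 - a) / 2"] unfolding e_def by auto
  then show False
    using d[of e] neg_before[of "t0 - e"] t0 by simp
qed

lemma filterlim_at_top_if_deriv_ge_harmonic:
  fixes f f' :: "real \<Rightarrow> real"
  assumes c: "0 < c" and BS: "0 \<le> B + S"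
    and deriv: "\<And>s. S < s \<Longrightarrow> (f has_real_derivative f' s) (at s)"
    and rate: "\<And>s. S < s \<Longrightarrow> c / (B + s) \<le> f' s"
  shows "filterlim f at_top at_top"
proof (rule filterlim_at_top_mono)
  define s0 where "s0 = S + 1"
  show "filterlim (\<lambda>s. f s0 + c * ln (B + s) - c * ln (B + s0)) at_top at_top"
    using c by real_asymp
  have "f s0 - c * ln (B + s0) \<le> f s - c * ln (B + s)" if "s0 \<le> s" for s
  proof (rule deriv_nonneg_imp_mono[OF _ _ that])
    fix t assume "t \<in> {s0..s}"
    then have t: "S < t" "0 < B + t" using BS unfolding s0_def by auto
    show "((\<lambda>s. f s - c * ln (B + s)) has_real_derivative f' t - c * (1 / (B + t))) (at t)"
      using t by (auto intro!: derivative_eq_intros deriv)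
    show "0 \<le> f' t - c * (1 / (B + t))"
      using rate[OF t(1)] by simp
  qed
  then show "\<forall>\<^sub>F s in at_top. f s0 + c * ln (B + s) - c * ln (B + s0) \<le> f s"
    unfolding eventually_at_top_linorder by (intro exI[of _ s0]) (auto simp: algebra_simps)
qed

lemma eventually_less_if_deriv_le_neg_harmonic:
  fixes f f' :: "real \<Rightarrow> real"
  assumes c: "0 < c" and BS: "0 < B + S"
    and deriv: "\<And>s. S \<le> s \<Longrightarrow> (f has_real_derivative f' s) (at s)"
    and rate: "\<And>s. S \<le> s \<Longrightarrow> a \<le> f s \<Longrightarrow> f' s \<le> - c / (B + s)"
  shows "\<exists>S'\<ge>S. \<forall>s\<ge>S'. f s < a"
proof -
  have "\<exists>s1\<ge>S. f s1 < a"
  proof (rule ccontr)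
    assume "\<not> ?thesis"
    then have above: "a \<le> f s" if "S \<le> s" for s
      using that by (meson not_le)
    have "filterlim (\<lambda>s. - f s) at_top at_top"
    proof (rule filterlim_at_top_if_deriv_ge_harmonic[OF c less_imp_le[OF BS]])
      show "((\<lambda>s. - f s) has_real_derivative - f' s) (at s)" if "S < s" for s
        using deriv[of s] that by (auto intro: DERIV_minus)
      show "c / (B + s) \<le> - f' s" if "S < s" for s
        using rate[of s] above[of s] that by simp
    qed
    then have "\<forall>\<^sub>F s in at_top. - a < - f s"
      unfolding filterlim_at_top_dense by blast
    then have "\<forall>\<^sub>F s in at_top. - a < - f s \<and> S \<le> s"
      using eventually_ge_at_top by (rule eventually_conj)
    then obtain s where "- a < - f s" "S \<le> s"
      unfolding eventually_at_top_linorder by blast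
    then show False using above by fastforce
  qed
  then obtain s1 where s1: "S \<le> s1" "f s1 < a" by blast
  have "f s - a < 0" if "s1 \<le> s" for s
  proof (rule DERIV_neg_at_zeros_imp_neg[OF _ _ _ that])
    show "((\<lambda>s. f s - a) has_real_derivative f' t) (at t)" if "s1 \<le> t" for t
      using deriv[of t] that s1 by (auto intro!: derivative_eq_intros)
    show "f s1 - a < 0" using s1 by simp
    show "f' t < 0" if "s1 \<le> t" "f t - a = 0" for t
    proof -
      have "0 < c / (B + t)"
        using c BS that s1 by simp
      then show ?thesis using rate[of t] that s1 by simp
    qed
  qed
  then show ?thesis using s1 by auto
qed

lemma exists_pos_if_deriv_ge_near_zero:
  fixes f f' :: "real \<Rightarrow> real"
  assumes deriv: "\<And>s. a \<le> s \<Longrightarrow> (f has_real_derivative f' s) (at s)"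
    and c: "0 < c" and start: "- \<delta> < f a"
    and rate: "\<And>s. a \<le> s \<Longrightarrow> - \<delta> \<le> f s \<Longrightarrow> f s \<le> 0 \<Longrightarrow> c \<le> f' s"
  shows "\<exists>s\<ge>a. 0 < f s"
proof (rule ccontr)
  assume "\<not> ?thesis"
  then have nonpos: "f s \<le> 0" if "a \<le> s" for s
    using that by (meson not_le)
  have stays: "- \<delta> < f s" if "a \<le> s" for s
  proof -
    have "- \<delta> - f s < 0"
    proof (rule DERIV_neg_at_zeros_imp_neg[where g = "\<lambda>s. - \<delta> - f s" and g' = "\<lambda>s. - f' s", OF _ _ _ that])
      show "((\<lambda>s. - \<delta> - f s) has_real_derivative - f' t) (at t)" if "a \<le> t" for t
        using deriv[OF that] by (auto intro!: derivative_eq_intros)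
      show "- f' t < 0" if "a \<le> t" "- \<delta> - f t = 0" for t
        using rate[of t] nonpos[of t] that c by simp
    qed (use start in simp)
    then show ?thesis by simp
  qed
  define b where "b = a + (\<delta> + 1) / c"
  have "0 < \<delta>" using start nonpos[of a] by simp
  then have "a \<le> b" unfolding b_def using c by simp
  have "f a - c * a \<le> f b - c * b"
  proof (rule deriv_nonneg_imp_mono[where g = "\<lambda>s. f s - c * s" and g' = "\<lambda>s. f' s - c", OF _ _ \<open>a \<le> b\<close>])
    show "((\<lambda>s. f s - c * s) has_real_derivative f' t - c) (at t)" if "t \<in> {a..b}" for t
      using deriv[of t] that by (auto intro!: derivative_eq_intros)
    show "0 \<le> f' t - c" if "t \<in> {a..b}" for t
      using rate[of t] stays[of t] nonpos[of t] that by simp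
  qed
  moreover have "c * (b - a) = \<delta> + 1"
    unfolding b_def using c by simp
  ultimately show False
    using start nonpos[of b] \<open>a \<le> b\<close> by (simp add: algebra_simps)
qed

section \<open>The derivative of a polar angle\<close>

lemma has_real_derivative_inner:
  fixes f g :: "real \<Rightarrow> 'a::real_inner"
  assumes "(f has_vector_derivative f') (at s)" and "(g has_vector_derivative g') (at s)"
  shows "((\<lambda>s. f s \<bullet> g s) has_real_derivative f s \<bullet> g' + f' \<bullet> g s) (at s)"
proof -
  have "((\<lambda>s. f s \<bullet> g s) has_derivative (\<lambda>h. h * (f s \<bullet> g') + h * (f' \<bullet> g s))) (at s)"
    using has_derivative_inner[OF assms[unfolded has_vector_derivative_def]] by simp
  moreover have "(\<lambda>h. h * (f s \<bullet> g') + h * (f' \<bullet> g s)) = (*) (f s \<bullet> g' + f' \<bullet> g s)"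
    by (auto simp: algebra_simps)
  ultimately show ?thesis by (simp add: has_field_derivative_def)
qed

lemma polar_angle_eq_arctan_near:
  fixes \<alpha> :: "real \<Rightarrow> real \<times> real" and \<omega> :: "real \<Rightarrow> real"
  assumes U: "open U" "s \<in> U" and cont: "isCont \<omega> s"
    and polar: "\<And>t. t \<in> U \<Longrightarrow> \<alpha> t = norm (\<alpha> t) *\<^sub>R (cos (\<omega> t), sin (\<omega> t))"
    and nonzero: "\<And>t. t \<in> U \<Longrightarrow> \<alpha> t \<noteq> 0"
  obtains V where "open V" "s \<in> V"
    "\<And>t. t \<in> V \<Longrightarrow> \<omega> t = \<omega> s + arctan ((\<alpha> t \<bullet> (- sin (\<omega> s), cos (\<omega> s))) / (\<alpha> t \<bullet> (cos (\<omega> s), sin (\<omega> s))))"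
proof -
  obtain d where "0 < d" and d: "\<And>t. dist t s < d \<Longrightarrow> \<bar>\<omega> t - \<omega> s\<bar> < pi / 2"
    using cont unfolding continuous_at_eps_delta dist_real_def by (metis pi_half_gt_zero)
  obtain d' where "0 < d'" "ball s d' \<subseteq> U"
    using U openE by blast
  show thesis
  proof (rule that[of "ball s (min d d')"])
    show "open (ball s (min d d'))" "s \<in> ball s (min d d')"
      using \<open>0 < d\<close> \<open>0 < d'\<close> by auto
    fix t assume "t \<in> ball s (min d d')"
    then have "t \<in> U" "\<bar>\<omega> t - \<omega> s\<bar> < pi / 2"
      using \<open>ball s d' \<subseteq> U\<close> d[of t] by (auto simp: dist_commute)
    then have range: "- (pi / 2) < \<omega> t - \<omega> s" "\<omega> t - \<omega> s < pi / 2"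
      by linarith+
    have "\<alpha> t \<bullet> (cos (\<omega> s), sin (\<omega> s)) = norm (\<alpha> t) * cos (\<omega> t - \<omega> s)"
      "\<alpha> t \<bullet> (- sin (\<omega> s), cos (\<omega> s)) = norm (\<alpha> t) * sin (\<omega> t - \<omega> s)"
      using arg_cong[OF polar[OF \<open>t \<in> U\<close>], of "\<lambda>x. x \<bullet> (cos (\<omega> s), sin (\<omega> s))"]
        arg_cong[OF polar[OF \<open>t \<in> U\<close>], of "\<lambda>x. x \<bullet> (- sin (\<omega> s), cos (\<omega> s))"]
      by (simp_all add: cos_diff sin_diff algebra_simps)
    then have "(\<alpha> t \<bullet> (- sin (\<omega> s), cos (\<omega> s))) / (\<alpha> t \<bullet> (cos (\<omega> s), sin (\<omega> s))) = tan (\<omega> t - \<omega> s)"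
      using nonzero[OF \<open>t \<in> U\<close>] cos_gt_zero_pi[OF range] by (simp add: tan_def)
    then show "\<omega> t = \<omega> s + arctan ((\<alpha> t \<bullet> (- sin (\<omega> s), cos (\<omega> s))) / (\<alpha> t \<bullet> (cos (\<omega> s), sin (\<omega> s))))"
      using arctan_tan[OF range] by simp
  qed
qed

lemma polar_angle_has_real_derivative:
  fixes \<alpha> :: "real \<Rightarrow> real \<times> real" and \<omega> :: "real \<Rightarrow> real"
  assumes U: "open U" "s \<in> U" and cont: "isCont \<omega> s"
    and polar: "\<And>t. t \<in> U \<Longrightarrow> \<alpha> t = norm (\<alpha> t) *\<^sub>R (cos (\<omega> t), sin (\<omega> t))"
    and nonzero: "\<And>t. t \<in> U \<Longrightarrow> \<alpha> t \<noteq> 0"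
    and deriv: "(\<alpha> has_vector_derivative v) (at s)"
  shows "(\<omega> has_real_derivative - (\<alpha> s \<bullet> J v) / (norm (\<alpha> s))^2) (at s)"
proof -
  define e1 where "e1 = (cos (\<omega> s), sin (\<omega> s))"
  define e2 where "e2 = (- sin (\<omega> s), cos (\<omega> s))"
  define r where "r = norm (\<alpha> s)"
  obtain V where "open V" "s \<in> V" and lift: "\<And>t. t \<in> V \<Longrightarrow> \<omega> t = \<omega> s + arctan ((\<alpha> t \<bullet> e2) / (\<alpha> t \<bullet> e1))"
    using polar_angle_eq_arctan_near[OF U cont polar nonzero] unfolding e1_def e2_def by blast
  have "0 < r" using nonzero U unfolding r_def by simp
  have \<alpha>_s: "\<alpha> s = r *\<^sub>R e1"
    using polar[OF U(2)] unfolding r_def e1_def .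
  then have "\<alpha> s \<bullet> e1 = r" "\<alpha> s \<bullet> e2 = 0"
    unfolding e1_def e2_def by (simp_all add: algebra_simps flip: distrib_left)
  moreover have "((\<lambda>t. \<alpha> t \<bullet> e1) has_real_derivative v \<bullet> e1) (at s)"
    "((\<lambda>t. \<alpha> t \<bullet> e2) has_real_derivative v \<bullet> e2) (at s)"
    using has_real_derivative_inner[OF deriv has_vector_derivative_const] by simp_all
  ultimately have "((\<lambda>t. \<omega> s + arctan ((\<alpha> t \<bullet> e2) / (\<alpha> t \<bullet> e1))) has_real_derivative (v \<bullet> e2) / r) (at s)"
    using \<open>0 < r\<close> by (auto intro!: derivative_eq_intros DERIV_arctan[THEN DERIV_chain2])
  moreover have "\<alpha> s \<bullet> J v = - r * (v \<bullet> e2)"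
    unfolding \<alpha>_s e1_def e2_def J_def by (simp add: inner_prod_def algebra_simps)
  then have "(v \<bullet> e2) / r = - (\<alpha> s \<bullet> J v) / r^2"
    using \<open>0 < r\<close> by (simp add: power2_eq_square)
  ultimately have "((\<lambda>t. \<omega> s + arctan ((\<alpha> t \<bullet> e2) / (\<alpha> t \<bullet> e1))) has_real_derivative - (\<alpha> s \<bullet> J v) / r^2) (at s)"
    by simp
  then show ?thesis
    unfolding r_def using \<open>open V\<close> \<open>s \<in> V\<close> lift[symmetric] by (rule has_field_derivative_transform_within_open)
qed

section \<open>The planar system for \<open>\<tau>\<close> and \<open>\<mu>\<close>\<close>

locale tau_mu_system =
  fixes h :: real and \<tau> \<mu> :: "real \<Rightarrow> real"
  assumes h_nonzero: "h \<noteq> 0"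
    and tau_deriv: "\<And>s. (\<tau> has_real_derivative 1 + K h (\<tau> s) (\<mu> s) * \<mu> s) (at s)"
    and mu_deriv: "\<And>s. (\<mu> has_real_derivative - (K h (\<tau> s) (\<mu> s) * \<tau> s)) (at s)"
begin

definition rho :: "real \<Rightarrow> real" where
  "rho s = (\<tau> s)^2 + (\<mu> s)^2"

lemma rho_nonneg: "0 \<le> rho s"
  unfolding rho_def by simp

lemma rho_deriv: "(rho has_real_derivative 2 * \<tau> s) (at s)"
proof -
  have "(rho has_real_derivative
      2 * \<tau> s * (1 + K h (\<tau> s) (\<mu> s) * \<mu> s) + 2 * \<mu> s * - (K h (\<tau> s) (\<mu> s) * \<tau> s)) (at s)"
    unfolding rho_def[abs_def] by (auto intro!: derivative_eq_intros tau_deriv mu_deriv)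
  then show ?thesis by (simp add: algebra_simps)
qed

text \<open>Since \<open>\<rho>' = 2 \<tau> \<le> 2 \<surd>\<rho>\<close>, \<open>\<rho>\<close> cannot cross the parabola \<open>(2 (B + s))\<^sup>2\<close> from below.\<close>

lemma linear_growth:
  obtains B where "0 < B" "\<And>s. 0 \<le> s \<Longrightarrow> \<bar>\<tau> s\<bar> \<le> 2 * (B + s) \<and> \<bar>\<mu> s\<bar> \<le> 2 * (B + s)"
proof
  define B where "B = sqrt (rho 0) + 1"
  show "0 < B" using real_sqrt_ge_zero[OF rho_nonneg[of 0]] unfolding B_def by linarith
  have rho_below: "rho s < (2 * (B + s))^2" if "0 \<le> s" for s
  proof -
    have "rho s - (2 * (B + s))^2 < 0"
    proof (rule DERIV_neg_at_zeros_imp_neg[OF _ _ _ that])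
      show "((\<lambda>s. rho s - (2 * (B + s))^2) has_real_derivative 2 * \<tau> t - 8 * (B + t)) (at t)" for t
        by (auto intro!: derivative_eq_intros rho_deriv simp: algebra_simps)
      have "B^2 = rho 0 + 2 * sqrt (rho 0) + 1"
        unfolding B_def using rho_nonneg[of 0] by (simp add: power2_sum)
      moreover have "B^2 \<le> (2 * (B + 0))^2"
        using \<open>0 < B\<close> by (simp add: power_mono)
      ultimately show "rho 0 - (2 * (B + 0))^2 < 0"
        using real_sqrt_ge_zero[OF rho_nonneg[of 0]] by linarith
      show "2 * \<tau> t - 8 * (B + t) < 0" if "0 \<le> t" "rho t - (2 * (B + t))^2 = 0" for t
      proof -
        have "(\<tau> t)^2 \<le> (2 * (B + t))^2"
          using that zero_le_power2[of "\<mu> t"] unfolding rho_def by linarith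
        then have "\<tau> t \<le> 2 * (B + t)"
          using \<open>0 < B\<close> that by (simp add: abs_le_square_iff[symmetric])
        then show ?thesis using \<open>0 < B\<close> that by simp
      qed
    qed
    then show ?thesis by simp
  qed
  show "\<bar>\<tau> s\<bar> \<le> 2 * (B + s) \<and> \<bar>\<mu> s\<bar> \<le> 2 * (B + s)" if "0 \<le> s" for s
  proof -
    have "(\<tau> s)^2 \<le> (2 * (B + s))^2" "(\<mu> s)^2 \<le> (2 * (B + s))^2"
      using rho_below[OF that] zero_le_power2[of "\<tau> s"] zero_le_power2[of "\<mu> s"]
      unfolding rho_def by linarith+
    then show ?thesis
      using that \<open>0 < B\<close> by (simp add: abs_le_square_iff[symmetric])
  qed
qed

lemma tau_pos_persists:
  assumes "0 < \<tau> s0" "s0 \<le> s"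
  shows "0 < \<tau> s"
proof -
  have "(\<lambda>s. - \<tau> s) s < 0"
  proof (rule DERIV_neg_at_zeros_imp_neg[OF _ _ _ assms(2)])
    show "((\<lambda>s. - \<tau> s) has_real_derivative - (1 + K h (\<tau> t) (\<mu> t) * \<mu> t)) (at t)" for t
      by (auto intro!: derivative_eq_intros tau_deriv)
    show "- (1 + K h (\<tau> t) (\<mu> t) * \<mu> t) < 0" if "- \<tau> t = 0" for t
      using one_add_K_mul_pos_at_zero[OF h_nonzero, of "\<mu> t"] that by simp
  qed (use assms in simp)
  then show ?thesis by simp
qed

lemma rho_mono_from_tau_pos:
  assumes "0 < \<tau> s0" "s0 \<le> s"
  shows "rho s0 \<le> rho s"
proof (rule deriv_nonneg_imp_mono[where g = rho and g' = "\<lambda>s. 2 * \<tau> s"])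
  show "0 \<le> 2 * \<tau> t" if "t \<in> {s0..s}" for t
    using tau_pos_persists[OF assms(1), of t] that by simp
qed (use rho_deriv assms in auto)

lemma tau_above_somewhere:
  assumes "0 < \<delta>"
  shows "\<exists>s\<ge>s0. - \<delta> < \<tau> s"
proof (rule ccontr)
  assume "\<not> ?thesis"
  then have below: "\<tau> s \<le> - \<delta>" if "s0 \<le> s" for s
    using that by (meson not_le)
  define s1 where "s1 = s0 + (rho s0 + 1) / (2 * \<delta>)"
  have "s0 \<le> s1"
    unfolding s1_def using rho_nonneg[of s0] assms by simp
  have "rho s1 + 2 * \<delta> * s1 \<le> rho s0 + 2 * \<delta> * s0"
  proof (rule deriv_nonpos_imp_antimono[where g = "\<lambda>s. rho s + 2 * \<delta> * s"
        and g' = "\<lambda>s. 2 * \<tau> s + 2 * \<delta>", OF _ _ \<open>s0 \<le> s1\<close>])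
    show "((\<lambda>s. rho s + 2 * \<delta> * s) has_real_derivative 2 * \<tau> t + 2 * \<delta>) (at t)" for t
      by (auto intro!: derivative_eq_intros rho_deriv)
    show "2 * \<tau> t + 2 * \<delta> \<le> 0" if "t \<in> {s0..s1}" for t
      using below[of t] that by simp
  qed
  moreover have "2 * \<delta> * (s1 - s0) = rho s0 + 1"
    unfolding s1_def using assms by simp
  ultimately show False
    using rho_nonneg[of s1] by (simp add: algebra_simps)
qed

lemma tau_pos_somewhere: "\<exists>s\<ge>0. 0 < \<tau> s"
proof (rule ccontr)
  assume "\<not> ?thesis"
  then have tau_nonpos: "\<tau> s \<le> 0" if "0 \<le> s" for s
    using that by (meson not_le)
  define r where "r = rho 0"
  have rho_le: "rho s \<le> r" if "0 \<le> s" for s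
    unfolding r_def using rho_deriv tau_nonpos that
    by (intro deriv_nonpos_imp_antimono[where g = rho and g' = "\<lambda>s. 2 * \<tau> s"]) auto
  define \<delta> where "\<delta> = h^2 / (4 * (1 + r)^2 * (1 + h^2))"
  define c where "c = h^2 / (2 * (1 + r) * (h^2 + r))"
  have "0 \<le> r" unfolding r_def by (rule rho_nonneg)
  then have "0 < \<delta>" "0 < c"
    unfolding \<delta>_def c_def using h_nonzero by (auto intro!: divide_pos_pos mult_pos_pos add_pos_nonneg)
  obtain s1 where "0 \<le> s1" "- \<delta> < \<tau> s1"
    using tau_above_somewhere[OF \<open>0 < \<delta>\<close>, of 0] by blast
  have "\<exists>s\<ge>s1. 0 < \<tau> s"
  proof (rule exists_pos_if_deriv_ge_near_zero[where f = \<tau>, OF tau_deriv \<open>0 < c\<close> \<open>- \<delta> < \<tau> s1\<close>])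
    show "c \<le> 1 + K h (\<tau> s) (\<mu> s) * \<mu> s" if "s1 \<le> s" "- \<delta> \<le> \<tau> s" "\<tau> s \<le> 0" for s
      unfolding c_def using h_nonzero
    proof (rule one_add_K_mul_ge_near_zero)
      show "\<bar>\<tau> s\<bar> \<le> h^2 / (4 * (1 + r)^2 * (1 + h^2))"
        using that unfolding \<delta>_def by simp
      show "(\<tau> s)^2 + (\<mu> s)^2 \<le> r"
        using rho_le[of s] that \<open>0 \<le> s1\<close> unfolding rho_def by simp
    qed
  qed
  then show False
    using tau_nonpos \<open>0 \<le> s1\<close> by (meson not_le order_trans)
qed

lemma slope_deriv:
  assumes "\<tau> s \<noteq> 0"
  shows "((\<lambda>s. \<mu> s / \<tau> s) has_real_derivative
    - ((\<mu> s + K h (\<tau> s) (\<mu> s) * rho s) / (\<tau> s)^2)) (at s)"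
proof -
  have "((\<lambda>s. \<mu> s / \<tau> s) has_real_derivative
      (- (K h (\<tau> s) (\<mu> s) * \<tau> s) * \<tau> s - \<mu> s * (1 + K h (\<tau> s) (\<mu> s) * \<mu> s)) / (\<tau> s * \<tau> s)) (at s)"
    using assms by (auto intro!: derivative_eq_intros tau_deriv mu_deriv)
  moreover have "- (K h (\<tau> s) (\<mu> s) * \<tau> s) * \<tau> s - \<mu> s * (1 + K h (\<tau> s) (\<mu> s) * \<mu> s)
      = - (\<mu> s + K h (\<tau> s) (\<mu> s) * rho s)"
    unfolding rho_def by (simp add: algebra_simps power2_eq_square)
  ultimately show ?thesis
    by (simp add: power2_eq_square minus_divide_left)
qed

lemma slope_eventually_below: "\<exists>S\<ge>0. \<exists>\<beta>>0. \<forall>s\<ge>S. 0 < \<tau> s \<and> \<mu> s < - (\<beta> * \<tau> s)"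
proof -
  obtain B where "0 < B" and growth: "\<And>s. 0 \<le> s \<Longrightarrow> \<bar>\<tau> s\<bar> \<le> 2 * (B + s) \<and> \<bar>\<mu> s\<bar> \<le> 2 * (B + s)"
    using linear_growth by blast
  obtain s0 where "0 \<le> s0" "0 < \<tau> s0"
    using tau_pos_somewhere by blast
  have tau_pos: "0 < \<tau> s" if "s0 \<le> s" for s
    using tau_pos_persists \<open>0 < \<tau> s0\<close> that .
  define r where "r = rho s0"
  have "0 < r"
    unfolding r_def rho_def using \<open>0 < \<tau> s0\<close> by (simp add: add_pos_nonneg)
  define \<beta> where "\<beta> = min (1/2) (r/2)"
  define C where "C = h^2 / (1 + h^2) * (r / (1 + r)) / 4"
  have "0 < \<beta>" "0 < C"
    unfolding \<beta>_def C_def using \<open>0 < r\<close> h_nonzero by (auto intro!: divide_pos_pos mult_pos_pos add_pos_nonneg)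
  have slope_rate: "- ((\<mu> s + K h (\<tau> s) (\<mu> s) * rho s) / (\<tau> s)^2) \<le> - C / (B + s)"
    if "s0 \<le> s" "- \<beta> \<le> \<mu> s / \<tau> s" for s
  proof -
    have "0 < \<tau> s" using tau_pos[OF that(1)] .
    have "C / (B + s) = h^2 / (1 + h^2) * (r / (1 + r)) / (2 * (2 * (B + s)))"
      unfolding C_def by simp
    also have "\<dots> \<le> (\<mu> s + K h (\<tau> s) (\<mu> s) * rho s) / (\<tau> s)^2"
      unfolding rho_def
    proof (rule add_K_mul_div_sq_ge[OF h_nonzero \<open>0 < \<tau> s\<close> _ \<open>0 < r\<close>])
      show "\<tau> s \<le> 2 * (B + s)"
        using growth[of s] that \<open>0 \<le> s0\<close> by (simp add: abs_le_iff)
      show "r \<le> (\<tau> s)^2 + (\<mu> s)^2"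
        using rho_mono_from_tau_pos[OF \<open>0 < \<tau> s0\<close> that(1)] unfolding r_def rho_def .
      show "- (\<beta> * \<tau> s) \<le> \<mu> s"
        using that(2) \<open>0 < \<tau> s\<close> by (simp add: divide_simps)
    qed (simp_all add: \<beta>_def)
    finally show ?thesis by simp
  qed
  obtain S where "s0 \<le> S" and below: "\<And>s. S \<le> s \<Longrightarrow> \<mu> s / \<tau> s < - \<beta>"
  proof -
    have "\<exists>S\<ge>s0. \<forall>s\<ge>S. \<mu> s / \<tau> s < - \<beta>"
    proof (rule eventually_less_if_deriv_le_neg_harmonic[OF \<open>0 < C\<close>])
      show "0 < B + s0" using \<open>0 < B\<close> \<open>0 \<le> s0\<close> by simp
      show "((\<lambda>s. \<mu> s / \<tau> s) has_real_derivative - ((\<mu> s + K h (\<tau> s) (\<mu> s) * rho s) / (\<tau> s)^2)) (at s)"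
        if "s0 \<le> s" for s
        using slope_deriv tau_pos[OF that] by simp
    qed (rule slope_rate)
    then show ?thesis using that by blast
  qed
  have "0 < \<tau> s \<and> \<mu> s < - (\<beta> * \<tau> s)" if "S \<le> s" for s
    using below[OF that] tau_pos[of s] that \<open>s0 \<le> S\<close> by (simp add: divide_simps)
  then show ?thesis
    using \<open>0 \<le> s0\<close> \<open>s0 \<le> S\<close> \<open>0 < \<beta>\<close> by (intro exI[of _ S] conjI exI[of _ \<beta>]) auto
qed

lemma eventually_angular_rate:
  "\<exists>S\<ge>0. \<exists>B>0. \<exists>c>0. \<forall>s\<ge>S. 0 < \<tau> s \<and> c / (B + s) \<le> - \<mu> s / rho s"
proof -
  obtain B where "0 < B" and growth: "\<And>s. 0 \<le> s \<Longrightarrow> \<bar>\<tau> s\<bar> \<le> 2 * (B + s) \<and> \<bar>\<mu> s\<bar> \<le> 2 * (B + s)"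
    using linear_growth by blast
  obtain S \<beta> where "0 \<le> S" "0 < \<beta>" and below: "\<And>s. S \<le> s \<Longrightarrow> 0 < \<tau> s \<and> \<mu> s < - (\<beta> * \<tau> s)"
    using slope_eventually_below by blast
  define c where "c = \<beta>^2 / (1 + \<beta>^2) / 2"
  have "0 < c" unfolding c_def using \<open>0 < \<beta>\<close> by (simp add: add_pos_nonneg)
  have "c / (B + s) \<le> - \<mu> s / rho s" if "S \<le> s" for s
  proof -
    have "c / (B + s) = \<beta>^2 / (1 + \<beta>^2) / (2 * (B + s))"
      unfolding c_def by (simp only: divide_divide_eq_left)
    also have "\<dots> \<le> - \<mu> s / rho s"
      unfolding rho_def using below[OF that] growth[of s] that \<open>0 \<le> S\<close> \<open>0 < \<beta>\<close>
      by (intro neg_div_sq_ge) auto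
    finally show ?thesis .
  qed
  then show ?thesis
    using below \<open>0 \<le> S\<close> \<open>0 < B\<close> \<open>0 < c\<close> by blast
qed

end

section \<open>Curves whose curvature is \<open>K(\<tau>, \<mu>)\<close>\<close>

lemma J_J: "J (J v) = - v"
  by (cases v) (simp add: J_def)

lemma J_scaleR: "J (c *\<^sub>R v) = c *\<^sub>R J v"
  by (cases v) (simp add: J_def)

lemma J_minus: "J (- v) = - J v"
  by (cases v) (simp add: J_def)

lemma inner_J_self: "v \<bullet> J v = 0"
  by (simp add: J_def inner_prod_def)

lemma bounded_linear_J: "bounded_linear J"
  unfolding J_def[abs_def]
  by (intro bounded_linear_Pair bounded_linear_minus bounded_linear_fst bounded_linear_snd)

lemma norm_eq_1_imp_sq: "norm (v :: real \<times> real) = 1 \<Longrightarrow> (fst v)^2 + (snd v)^2 = 1"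
  by (cases v) (simp add: norm_Pair)

lemma unit_perp_eq_scaleR_J:
  fixes v w :: "real \<times> real"
  assumes "norm v = 1" and "w \<bullet> v = 0"
  shows "w = (w \<bullet> J v) *\<^sub>R J v"
proof -
  obtain p q a b where v: "v = (p, q)" and w: "w = (a, b)"
    by (cases v, cases w) auto
  have "p^2 + q^2 = 1" "a * p + b * q = 0"
    using assms norm_eq_1_imp_sq[of v] unfolding v w by (simp_all add: inner_prod_def)
  then have "a = (a * q - b * p) * q" "b = (b * p - a * q) * p"
    by algebra+
  then show ?thesis
    unfolding v w J_def by (simp add: inner_prod_def algebra_simps)
qed

lemma norm_sq_eq_inner_sq_add_inner_J_sq:
  fixes a v :: "real \<times> real"
  assumes "norm v = 1"
  shows "(norm a)^2 = (a \<bullet> v)^2 + (a \<bullet> J v)^2"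
proof -
  obtain p q x y where v: "v = (p, q)" and a: "a = (x, y)"
    by (cases v, cases a) auto
  have "p^2 + q^2 = 1"
    using norm_eq_1_imp_sq[OF assms] unfolding v by simp
  then have "x^2 + y^2 = (x * p + y * q)^2 + (y * p - x * q)^2"
    by algebra
  then show ?thesis
    unfolding v a J_def by (simp add: norm_Pair inner_prod_def algebra_simps)
qed

lemma unit_speed_deriv_orthogonal:
  fixes f :: "real \<Rightarrow> 'a::real_inner"
  assumes unit: "\<And>t. norm (f t) = 1" and deriv: "(f has_vector_derivative f') (at s)"
  shows "f' \<bullet> f s = 0"
proof -
  have "((\<lambda>t. f t \<bullet> f t) has_real_derivative f s \<bullet> f' + f' \<bullet> f s) (at s)"
    using has_real_derivative_inner[OF deriv deriv] .
  moreover have "(\<lambda>t. f t \<bullet> f t) = (\<lambda>t. 1)"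
    using unit by (simp add: norm_eq_sqrt_inner)
  ultimately have "f s \<bullet> f' + f' \<bullet> f s = 0"
    using DERIV_const DERIV_unique by metis
  then show ?thesis by (simp add: inner_commute)
qed

definition polar_angle_diverges :: "(real \<Rightarrow> real \<times> real) \<Rightarrow> real \<Rightarrow> bool" where
  "polar_angle_diverges \<alpha> S \<longleftrightarrow> (\<forall>s\<ge>S. \<alpha> s \<noteq> 0)
     \<and> (\<forall>\<omega>. continuous_on {S..} \<omega> \<and> (\<forall>s\<ge>S. \<alpha> s = norm (\<alpha> s) *\<^sub>R (cos (\<omega> s), sin (\<omega> s)))
           \<longrightarrow> filterlim \<omega> at_top at_top)"

locale K_curve =
  fixes h :: real and \<alpha> \<alpha>' \<alpha>'' :: "real \<Rightarrow> real \<times> real"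
  assumes h_nonzero: "h \<noteq> 0"
    and vel: "\<And>s. (\<alpha> has_vector_derivative \<alpha>' s) (at s)"
    and acc: "\<And>s. (\<alpha>' has_vector_derivative \<alpha>'' s) (at s)"
    and unit_speed: "\<And>s. norm (\<alpha>' s) = 1"
    and curvature: "\<And>s. \<alpha>'' s \<bullet> J (\<alpha>' s) = K h (\<alpha> s \<bullet> \<alpha>' s) (\<alpha> s \<bullet> J (\<alpha>' s))"
begin

lemma acc_eq_curvature_normal: "\<alpha>'' s = (\<alpha>'' s \<bullet> J (\<alpha>' s)) *\<^sub>R J (\<alpha>' s)"
  using unit_perp_eq_scaleR_J[OF unit_speed unit_speed_deriv_orthogonal[OF unit_speed acc]] .

sublocale tau_mu_system h "\<lambda>s. \<alpha> s \<bullet> \<alpha>' s" "\<lambda>s. \<alpha> s \<bullet> J (\<alpha>' s)"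
proof
  fix s
  define k where "k = \<alpha>'' s \<bullet> J (\<alpha>' s)"
  have acc_eq: "\<alpha>'' s = k *\<^sub>R J (\<alpha>' s)"
    unfolding k_def by (rule acc_eq_curvature_normal)
  have "\<alpha>' s \<bullet> \<alpha>' s = 1"
    using unit_speed[of s] by (simp add: norm_eq_sqrt_inner)
  moreover have "\<alpha> s \<bullet> \<alpha>'' s = k * (\<alpha> s \<bullet> J (\<alpha>' s))"
    by (simp add: acc_eq)
  ultimately show "((\<lambda>s. \<alpha> s \<bullet> \<alpha>' s) has_real_derivative
      1 + K h (\<alpha> s \<bullet> \<alpha>' s) (\<alpha> s \<bullet> J (\<alpha>' s)) * (\<alpha> s \<bullet> J (\<alpha>' s))) (at s)"
    using has_real_derivative_inner[OF vel acc, of s] curvature[of s] unfolding k_def by (simp add: add.commute)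
  have dJ: "((\<lambda>s. J (\<alpha>' s)) has_vector_derivative J (\<alpha>'' s)) (at s)"
    by (rule bounded_linear.has_vector_derivative[OF bounded_linear_J acc])
  have "\<alpha> s \<bullet> J (\<alpha>'' s) = - k * (\<alpha> s \<bullet> \<alpha>' s)"
    by (simp add: acc_eq J_scaleR J_J)
  then show "((\<lambda>s. \<alpha> s \<bullet> J (\<alpha>' s)) has_real_derivative
      - (K h (\<alpha> s \<bullet> \<alpha>' s) (\<alpha> s \<bullet> J (\<alpha>' s)) * (\<alpha> s \<bullet> \<alpha>' s))) (at s)"
    using has_real_derivative_inner[OF vel dJ] curvature[of s] unfolding k_def
    by (simp add: inner_J_self)
qed (rule h_nonzero)

lemma rho_eq_norm_sq: "rho s = (norm (\<alpha> s))^2"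
  unfolding rho_def using norm_sq_eq_inner_sq_add_inner_J_sq[OF unit_speed] by simp

lemma reflect: "K_curve h (\<lambda>s. \<alpha> (- s)) (\<lambda>s. - \<alpha>' (- s)) (\<lambda>s. \<alpha>'' (- s))"
proof
  have minus: "(uminus has_vector_derivative - 1) (at s)" for s :: real
    by (auto intro!: derivative_eq_intros)
  show "((\<lambda>s. \<alpha> (- s)) has_vector_derivative - \<alpha>' (- s)) (at s)" for s
    using vector_diff_chain_at[OF minus vel] by (simp add: o_def)
  show "((\<lambda>s. - \<alpha>' (- s)) has_vector_derivative \<alpha>'' (- s)) (at s)" for s
    using has_vector_derivative_minus[OF vector_diff_chain_at[OF minus acc]] by (simp add: o_def)
  show "\<alpha>'' (- s) \<bullet> J (- \<alpha>' (- s))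
      = K h (\<alpha> (- s) \<bullet> - \<alpha>' (- s)) (\<alpha> (- s) \<bullet> J (- \<alpha>' (- s)))" for s
    using curvature[of "- s"] K_minus_minus by (simp add: J_minus)
qed (use h_nonzero unit_speed in auto)

lemma eventually_polar_angle_diverges: "\<forall>\<^sub>F S in at_top. polar_angle_diverges \<alpha> S"
proof -
  obtain S0 B c where "0 \<le> S0" "0 < B" "0 < c"
    and rate: "\<And>s. S0 \<le> s \<Longrightarrow> 0 < \<alpha> s \<bullet> \<alpha>' s \<and> c / (B + s) \<le> - (\<alpha> s \<bullet> J (\<alpha>' s)) / rho s"
    using eventually_angular_rate by blast
  have nonzero: "\<alpha> s \<noteq> 0" if "S0 \<le> s" for s
    using rate[OF that] by auto
  have "polar_angle_diverges \<alpha> S" if "S0 \<le> S" for S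
    unfolding polar_angle_diverges_def
  proof (intro conjI allI impI)
    show "\<alpha> s \<noteq> 0" if "S \<le> s" for s
      using nonzero \<open>S0 \<le> S\<close> that by simp
    fix \<omega>
    assume \<omega>: "continuous_on {S..} \<omega> \<and> (\<forall>s\<ge>S. \<alpha> s = norm (\<alpha> s) *\<^sub>R (cos (\<omega> s), sin (\<omega> s)))"
    show "filterlim \<omega> at_top at_top"
    proof (rule filterlim_at_top_if_deriv_ge_harmonic[OF \<open>0 < c\<close>])
      show "0 \<le> B + S" using \<open>0 \<le> S0\<close> \<open>S0 \<le> S\<close> \<open>0 < B\<close> by simp
      show "(\<omega> has_real_derivative - (\<alpha> s \<bullet> J (\<alpha>' s)) / rho s) (at s)" if "S < s" for s
        unfolding rho_eq_norm_sq
      proof (rule polar_angle_has_real_derivative[where U = "{S<..}"])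
        show "isCont \<omega> s"
          using continuous_on_interior[of "{S..}" \<omega> s] \<omega> that by simp
      qed (use that \<open>S0 \<le> S\<close> \<omega> nonzero vel in auto)
      show "c / (B + s) \<le> - (\<alpha> s \<bullet> J (\<alpha>' s)) / rho s" if "S < s" for s
        using rate[of s] that \<open>S0 \<le> S\<close> by simp
    qed
  qed
  then show ?thesis
    unfolding eventually_at_top_linorder by blast
qed

end

lemma polar_angle_diverges_reflect:
  assumes "polar_angle_diverges (\<lambda>s. \<alpha> (- s)) S"
    and "continuous_on {..-S} \<omega>"
    and "\<forall>s\<le>-S. \<alpha> s = norm (\<alpha> s) *\<^sub>R (cos (\<omega> s), sin (\<omega> s))"
  shows "filterlim \<omega> at_top at_bot"
proof -
  have "continuous_on {S..} (\<lambda>s. \<omega> (- s))"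
    using assms(2) by (auto intro!: continuous_on_compose2[of "{..-S}" \<omega>] continuous_intros)
  then have "filterlim (\<lambda>s. \<omega> (- s)) at_top at_top"
    using assms(1,3) unfolding polar_angle_diverges_def by auto
  then show ?thesis
    by (simp add: filterlim_at_top_mirror)
qed

theorem claim8:
  fixes h :: real
    and \<alpha> \<alpha>' \<alpha>'' :: "real \<Rightarrow> real \<times> real"
  assumes h: "h > 0"
    and d1: "\<And>s. (\<alpha> has_vector_derivative \<alpha>' s) (at s)"
    and d2: "\<And>s. (\<alpha>' has_vector_derivative \<alpha>'' s) (at s)"
    and unit: "\<And>s. norm (\<alpha>' s) = 1"
    and curv: "\<And>s. \<alpha>'' s \<bullet> J (\<alpha>' s) = K h (\<alpha> s \<bullet> \<alpha>' s) (\<alpha> s \<bullet> J (\<alpha>' s))"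
  shows "\<exists>S. (\<forall>s. \<bar>s\<bar> \<ge> S \<longrightarrow> \<alpha> s \<noteq> 0)
           \<and> (\<forall>\<omega>. continuous_on {S..} \<omega>
                  \<and> (\<forall>s\<ge>S. \<alpha> s = norm (\<alpha> s) *\<^sub>R (cos (\<omega> s), sin (\<omega> s)))
                  \<longrightarrow> filterlim \<omega> at_top at_top)
           \<and> (\<forall>\<omega>. continuous_on {..-S} \<omega>
                  \<and> (\<forall>s\<le>-S. \<alpha> s = norm (\<alpha> s) *\<^sub>R (cos (\<omega> s), sin (\<omega> s)))
                  \<longrightarrow> filterlim \<omega> at_top at_bot)"
proof -
  interpret forward: K_curve h \<alpha> \<alpha>' \<alpha>''
    using assms by unfold_locales auto
  interpret backward: K_curve h "\<lambda>s. \<alpha> (- s)" "\<lambda>s. - \<alpha>' (- s)" "\<lambda>s. \<alpha>'' (- s)"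
    by (rule forward.reflect)
  have "\<forall>\<^sub>F S in at_top. polar_angle_diverges \<alpha> S \<and> polar_angle_diverges (\<lambda>s. \<alpha> (- s)) S"
    using forward.eventually_polar_angle_diverges backward.eventually_polar_angle_diverges
    by (rule eventually_conj)
  then obtain S where fw: "polar_angle_diverges \<alpha> S" and bw: "polar_angle_diverges (\<lambda>s. \<alpha> (- s)) S"
    unfolding eventually_at_top_linorder by blast
  have nonzero: "\<forall>s\<ge>S. \<alpha> s \<noteq> 0" "\<forall>s\<ge>S. \<alpha> (- s) \<noteq> 0"
    using fw bw unfolding polar_angle_diverges_def by auto
  show ?thesis
  proof (intro exI[of _ S] conjI allI impI)
    show "\<alpha> s \<noteq> 0" if "\<bar>s\<bar> \<ge> S" for s
      using nonzero(1)[rule_format, of s] nonzero(2)[rule_format, of "- s"] that by (cases "0 \<le> s") auto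
    show "filterlim \<omega> at_top at_top"
      if "continuous_on {S..} \<omega> \<and> (\<forall>s\<ge>S. \<alpha> s = norm (\<alpha> s) *\<^sub>R (cos (\<omega> s), sin (\<omega> s)))" for \<omega>
      using fw that unfolding polar_angle_diverges_def by blast
    show "filterlim \<omega> at_top at_bot"
      if "continuous_on {..-S} \<omega> \<and> (\<forall>s\<le>-S. \<alpha> s = norm (\<alpha> s) *\<^sub>R (cos (\<omega> s), sin (\<omega> s)))" for \<omega>
      using polar_angle_diverges_reflect[OF bw] that by blast
  qed
qed

end
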